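(* For any positive integers $q,k,t$ there exists a constant $f(q,k,t)$ such that the following holds. Let $D=(V,A)$ be a Steiner rooted $k$-arc-connected directed graph with root $r$ and a set $S\subseteq V\setminus\{r\}$ of $t$ terminals. Let $\mathcal{C}$ be a family of pairwise vertex-disjoint directed cycles in $D$ with $|\mathcal{C}|\ge f(q,k,t)$ such that every $C\in\mathcal{C}$ is $s$-essential for every $s\in S$. Then there exist $C_1,\ldots,C_q\in\mathcal{C}$ such that for every $s\in S$, either $(C_1,\ldots,C_q)$ or $(C_q,\ldots,C_1)$ is an $s$-ordered sequence of directed cycles.
   Context: Let $D=(V,A)$ be a directed graph with root $r\in V$ and terminal set $S\subseteq V\setminus\{r\}$; it is Steiner rooted $k$-arc-connected if for every $s\in S$ there are $k$ pairwise arc-disjoint directed $r$-$s$ paths. For $s\in S$, a set $U\subseteq V$ is an $s$-cut if $r\in U$ and $s\notin U$; it is a tight $s$-cut if moreover the number of arcs leaving $U$ equals $k$. A set $U$ properly intersects a directed cycle $C$ if $V(C)\cap U\neq\emptyset$ and $V(C)\setminus U\neq\emptyset$. A directed cycle $C$ is $s$-essential if some tight $s$-cut properly intersects $C$. A sequence of directed cycles $(C_1,\ldots,C_q)$ is $s$-ordered if there exist tight $s$-cuts $U_1,\ldots,U_q$ such that $V(C_i)\subseteq U_j$ for all $i<j$, $V(C_i)\cap U_j=\emptyset$ for all $i>j$, and $U_i$ properly intersects $C_i$ for every $i$. *)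

theory Defs
  imports "Graph_Theory.Graph_Theory"
begin

text \<open>Digraphs are finite multi-digraphs in the sense of the AFP entry Graph_Theory
  (fin_digraph).  Directed paths and directed cycles are the library notions
  pre_digraph.apath and pre_digraph.cycle (lists of arcs).\<close>

definition cyc_verts :: "('a,'b) pre_digraph \<Rightarrow> 'b list \<Rightarrow> 'a set" where
  "cyc_verts G C = tail G ` set C"

definition steiner_rooted_k_arc_connected ::
  "('a,'b) pre_digraph \<Rightarrow> 'a \<Rightarrow> 'a set \<Rightarrow> nat \<Rightarrow> bool" where
  "steiner_rooted_k_arc_connected G r S k \<longleftrightarrow>
     (\<forall>s\<in>S. \<exists>P :: nat \<Rightarrow> 'b list.
        (\<forall>i<k. pre_digraph.apath G r (P i) s) \<and>
        (\<forall>i<k. \<forall>j<k. i \<noteq> j \<longrightarrow> set (P i) \<inter> set (P j) = {}))"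

definition out_cut :: "('a,'b) pre_digraph \<Rightarrow> 'a set \<Rightarrow> 'b set" where
  "out_cut G U = {a \<in> arcs G. tail G a \<in> U \<and> head G a \<notin> U}"

definition s_cut :: "('a,'b) pre_digraph \<Rightarrow> 'a \<Rightarrow> 'a \<Rightarrow> 'a set \<Rightarrow> bool" where
  "s_cut G r s U \<longleftrightarrow> U \<subseteq> verts G \<and> r \<in> U \<and> s \<notin> U"

definition tight_s_cut :: "('a,'b) pre_digraph \<Rightarrow> nat \<Rightarrow> 'a \<Rightarrow> 'a \<Rightarrow> 'a set \<Rightarrow> bool" where
  "tight_s_cut G k r s U \<longleftrightarrow> s_cut G r s U \<and> card (out_cut G U) = k"

definition properly_intersects :: "('a,'b) pre_digraph \<Rightarrow> 'a set \<Rightarrow> 'b list \<Rightarrow> bool" where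
  "properly_intersects G U C \<longleftrightarrow>
     cyc_verts G C \<inter> U \<noteq> {} \<and> cyc_verts G C - U \<noteq> {}"

definition s_essential :: "('a,'b) pre_digraph \<Rightarrow> nat \<Rightarrow> 'a \<Rightarrow> 'a \<Rightarrow> 'b list \<Rightarrow> bool" where
  "s_essential G k r s C \<longleftrightarrow> (\<exists>U. tight_s_cut G k r s U \<and> properly_intersects G U C)"

definition s_ordered ::
  "('a,'b) pre_digraph \<Rightarrow> nat \<Rightarrow> 'a \<Rightarrow> 'a \<Rightarrow> nat \<Rightarrow> (nat \<Rightarrow> 'b list) \<Rightarrow> bool" where
  "s_ordered G k r s q Cs \<longleftrightarrow>
     (\<exists>U :: nat \<Rightarrow> 'a set.
        (\<forall>i\<in>{1..q}. tight_s_cut G k r s (U i)) \<and>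
        (\<forall>i\<in>{1..q}. \<forall>j\<in>{1..q}. i < j \<longrightarrow> cyc_verts G (Cs i) \<subseteq> U j) \<and>
        (\<forall>i\<in>{1..q}. \<forall>j\<in>{1..q}. i > j \<longrightarrow> cyc_verts G (Cs i) \<inter> U j = {}) \<and>
        (\<forall>i\<in>{1..q}. properly_intersects G (U i) (Cs i)))"

end

theory Submission
  imports Defs "HOL-Library.Ramsey"
begin

text \<open>For every terminal s and every cycle C fix a tight s-cut W_s(C) properly intersecting C.
  Tight s-cuts are closed under union and intersection (the out-degree is submodular and bounded
  below by k thanks to the k arc-disjoint paths), and a tight cut, having only k outgoing arcs,
  properly intersects at most k of the disjoint cycles. Number the cycles and colour each pair
  C < C' by recording, for every terminal s, whether C' lies inside, outside or across W_s(C)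
  and likewise for C and W_s(C'); there are 9^t colours. Ramsey's theorem yields q + k + 1
  cycles on which the colouring is constant. For a fixed s, a crossing colour would make the
  first (or last) cut cross all of them, "inside/inside" would make the intersection of all the
  cuts cross all of them, and "outside/outside" their union. Hence every cycle lies outside the
  cuts of the earlier cycles and inside those of the later ones, or vice versa, which is an
  s-ordering in one of the two directions.\<close>

lemma card_le_if_disjoint_family_meets:
  assumes "finite X" "disjoint_family_on A I" "\<And>i. i \<in> I \<Longrightarrow> A i \<inter> X \<noteq> {}"
  shows "card I \<le> card X"
proof -
  have "\<forall>i\<in>I. \<exists>x. x \<in> A i \<inter> X"
    using assms(3) by blast
  then obtain h where h: "\<forall>i\<in>I. h i \<in> A i \<inter> X"
    by metis
  have "inj_on h I"
  proof (rule inj_onI)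
    fix i j assume "i \<in> I" "j \<in> I" "h i = h j"
    then have "h i \<in> A i \<inter> A j"
      using h by auto
    then show "i = j"
      using assms(2) \<open>i \<in> I\<close> \<open>j \<in> I\<close> unfolding disjoint_family_on_def by blast
  qed
  moreover have "h ` I \<subseteq> X"
    using h by blast
  ultimately show ?thesis
    using assms(1) by (rule card_inj_on_le)
qed

lemma partn_lst_homogeneous_finite_colours:
  assumes "partn_lst \<beta> (replicate c m) 2" "f \<in> [\<beta>]\<^bsup>2\<^esup> \<rightarrow> K" "finite K" "card K \<le> c"
  obtains H \<kappa> where "H \<in> [\<beta>]\<^bsup>m\<^esup>" "f ` [H]\<^bsup>2\<^esup> \<subseteq> {\<kappa>}"
proof -
  obtain idx where idx: "bij_betw idx K {0..<card K}"
    using ex_bij_betw_finite_nat assms(3) by blast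
  have "idx \<circ> f \<in> [\<beta>]\<^bsup>2\<^esup> \<rightarrow> {..<c}"
    using assms(2,4) bij_betwE[OF idx] by (fastforce simp: Pi_iff)
  then obtain i H where "H \<in> [\<beta>]\<^bsup>(replicate c m ! i)\<^esup>" "(idx \<circ> f) ` [H]\<^bsup>2\<^esup> \<subseteq> {i}" "i < c"
    using partn_lstE[OF assms(1)] by (metis length_replicate)
  moreover have "f P \<in> K" if "P \<in> [H]\<^bsup>2\<^esup>" for P
    using that assms(2) \<open>H \<in> _\<close> unfolding nsets_def by auto
  ultimately show thesis
    using that[of H "inv_into K idx i"] bij_betw_inv_into_left[OF idx] by fastforce
qed

lemma strict_mono_selection:
  fixes H :: "'a :: wellorder set"
  assumes "finite H" "q \<le> card H"
  obtains x :: "nat \<Rightarrow> 'a" where "x ` {1..q} \<subseteq> H" "strict_mono_on {1..q} x"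
proof -
  obtain h where h: "bij_betw h {..<card H} H" "strict_mono_on {..<card H} h"
    using ex_bij_betw_strict_mono_card[OF assms(1)] by blast
  show thesis
  proof
    show "(\<lambda>p. h (p - 1)) ` {1..q} \<subseteq> H"
      using bij_betwE[OF h(1)] assms(2) by auto
    show "strict_mono_on {1..q} (\<lambda>p. h (p - 1))"
    proof (rule strict_mono_onI)
      fix p p' assume "p \<in> {1..q}" "p' \<in> {1..q}" "p < p'"
      then show "h (p - 1) < h (p' - 1)"
        using strict_mono_onD[OF h(2)] assms(2) by auto
    qed
  qed
qed

section \<open>Walks leaving a vertex set\<close>

context pre_digraph
begin

lemma cas_no_out_cut_arc:
  assumes "cas u p v" "u \<in> U" "set p \<subseteq> arcs G" "set p \<inter> out_cut G U = {}"
  shows "v \<in> U \<and> tail G ` set p \<subseteq> U"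
  using assms by (induction p arbitrary: u) (auto simp: out_cut_def)

lemma cas_append:
  assumes "cas u p v" "cas v q w"
  shows "cas u (p @ q) w"
  using assms by (induction p arbitrary: u) auto

lemma awalk_meets_out_cut:
  assumes "awalk u p v" "u \<in> U" "v \<notin> U"
  shows "set p \<inter> out_cut G U \<noteq> {}"
  using assms cas_no_out_cut_arc unfolding awalk_def by blast

lemma cycle_meets_out_cut:
  assumes "cycle C" "properly_intersects G U C"
  shows "set C \<inter> out_cut G U \<noteq> {}"
proof
  assume no_exit: "set C \<inter> out_cut G U = {}"
  obtain u where walk: "awalk u C u"
    using assms(1) unfolding cycle_def by blast
  obtain a where "a \<in> set C" and inside: "tail G a \<in> U"
    using assms(2) unfolding properly_intersects_def cyc_verts_def by blast
  then obtain p q where C: "C = p @ a # q"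
    by (meson split_list)
  \<comment> \<open>rotated to start inside U, the closed walk never leaves U\<close>
  have "cas u p (tail G a)" "cas (tail G a) (a # q) u"
    using walk unfolding C awalk_def by auto
  then have "cas (tail G a) (a # q @ p) (tail G a)"
    using cas_append by fastforce
  moreover have "set (a # q @ p) = set C"
    unfolding C by auto
  ultimately have "tail G ` set C \<subseteq> U"
    using cas_no_out_cut_arc[of "tail G a" "a # q @ p" "tail G a" U] walk no_exit inside
    unfolding awalk_def by auto
  then show False
    using assms(2) unfolding properly_intersects_def cyc_verts_def by blast
qed

lemma card_crossing_cycles_le:
  assumes "finite (arcs G)"
    and "\<forall>i\<in>I. cycle (C i)"
    and "\<forall>i\<in>I. \<forall>j\<in>I. i \<noteq> j \<longrightarrow> cyc_verts G (C i) \<inter> cyc_verts G (C j) = {}"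
    and "\<forall>i\<in>I. properly_intersects G U (C i)"
  shows "card I \<le> card (out_cut G U)"
proof (rule card_le_if_disjoint_family_meets)
  show "finite (out_cut G U)"
    using assms(1) unfolding out_cut_def by simp
  show "disjoint_family_on (\<lambda>i. set (C i)) I"
    using assms(3) unfolding disjoint_family_on_def cyc_verts_def by blast
qed (use assms(2,4) cycle_meets_out_cut in blast)

end

section \<open>Position of a cycle relative to a cut\<close>

datatype cut_position = Inside | Outside | Crossing

lemma UNIV_cut_position: "UNIV = {Inside, Outside, Crossing}"
  using cut_position.exhaust by auto

instance cut_position :: finite
  by standard (simp add: UNIV_cut_position)

lemma card_UNIV_cut_position_pair: "card (UNIV :: (cut_position \<times> cut_position) set) = 9"
  by (simp add: UNIV_cut_position flip: UNIV_Times_UNIV)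

definition cycle_position :: "('a, 'b) pre_digraph \<Rightarrow> 'a set \<Rightarrow> 'b list \<Rightarrow> cut_position" where
  "cycle_position G U C =
     (if cyc_verts G C \<subseteq> U then Inside
      else if cyc_verts G C \<inter> U = {} then Outside else Crossing)"

lemma cycle_position_Inside: "cycle_position G U C = Inside \<Longrightarrow> cyc_verts G C \<subseteq> U"
  and cycle_position_Outside: "cycle_position G U C = Outside \<Longrightarrow> cyc_verts G C \<inter> U = {}"
  and cycle_position_Crossing: "cycle_position G U C = Crossing \<longleftrightarrow> properly_intersects G U C"
  unfolding cycle_position_def properly_intersects_def by (auto split: if_splits)

lemma properly_intersects_INTER:
  assumes "j \<in> H" "properly_intersects G (W j) C" "\<forall>i\<in>H - {j}. cyc_verts G C \<subseteq> W i"
  shows "properly_intersects G (\<Inter>i\<in>H. W i) C"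
proof -
  have "cyc_verts G C \<inter> (\<Inter>i\<in>H. W i) = cyc_verts G C \<inter> W j"
    using assms(1,3) by blast
  then show ?thesis
    using assms(1,2) unfolding properly_intersects_def by blast
qed

lemma properly_intersects_UNION:
  assumes "j \<in> H" "properly_intersects G (W j) C" "\<forall>i\<in>H - {j}. cyc_verts G C \<inter> W i = {}"
  shows "properly_intersects G (\<Union>i\<in>H. W i) C"
proof -
  have "cyc_verts G C - (\<Union>i\<in>H. W i) = cyc_verts G C - W j"
    using assms(1,3) by blast
  then show ?thesis
    using assms(1,2) unfolding properly_intersects_def by blast
qed

lemma s_orderedI:
  assumes "\<And>i. i \<in> {1..q} \<Longrightarrow> tight_s_cut G k r s (U i) \<and> properly_intersects G (U i) (Cs i)"
    and "\<And>i j. i \<in> {1..q} \<Longrightarrow> j \<in> {1..q} \<Longrightarrow> i < j \<Longrightarrow>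
           cyc_verts G (Cs i) \<subseteq> U j \<and> cyc_verts G (Cs j) \<inter> U i = {}"
  shows "s_ordered G k r s q Cs"
  unfolding s_ordered_def using assms by (intro exI[of _ U]) blast

section \<open>Tight cuts\<close>

lemma card_out_cut_submodular:
  assumes "finite (arcs G)"
  shows "card (out_cut G (U \<union> W)) + card (out_cut G (U \<inter> W))
           \<le> card (out_cut G U) + card (out_cut G W)"
proof -
  have fin: "finite (out_cut G X)" for X
    using assms unfolding out_cut_def by simp
  have "card (out_cut G (U \<union> W)) + card (out_cut G (U \<inter> W)) =
      card (out_cut G (U \<union> W) \<union> out_cut G (U \<inter> W))
      + card (out_cut G (U \<union> W) \<inter> out_cut G (U \<inter> W))"
    using card_Un_Int fin by blast
  also have "\<dots> \<le> card (out_cut G U \<union> out_cut G W) + card (out_cut G U \<inter> out_cut G W)"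
    using fin by (intro add_mono card_mono) (auto simp: out_cut_def)
  also have "\<dots> = card (out_cut G U) + card (out_cut G W)"
    using card_Un_Int fin by metis
  finally show ?thesis .
qed

context
  fixes G :: "('a, 'b) pre_digraph" and r :: 'a and S :: "'a set" and k :: nat
  assumes fin: "fin_digraph G" and conn: "steiner_rooted_k_arc_connected G r S k"
begin

interpretation fin_digraph G
  by (rule fin)

lemma k_le_card_out_cut:
  assumes "s \<in> S" "s_cut G r s U"
  shows "k \<le> card (out_cut G U)"
proof -
  obtain P where paths: "\<forall>i<k. pre_digraph.apath G r (P i) s"
    and disjoint: "\<forall>i<k. \<forall>j<k. i \<noteq> j \<longrightarrow> set (P i) \<inter> set (P j) = {}"
    using conn assms(1) unfolding steiner_rooted_k_arc_connected_def by blast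
  have "card {..<k} \<le> card (out_cut G U)"
  proof (rule card_le_if_disjoint_family_meets)
    show "finite (out_cut G U)"
      using finite_arcs unfolding out_cut_def by simp
    show "disjoint_family_on (\<lambda>i. set (P i)) {..<k}"
      using disjoint unfolding disjoint_family_on_def by blast
    show "set (P i) \<inter> out_cut G U \<noteq> {}" if "i \<in> {..<k}" for i
      using that paths assms(2) awalk_meets_out_cut unfolding apath_def s_cut_def by fastforce
  qed
  then show ?thesis by simp
qed

lemma tight_s_cut_Un_Int:
  assumes "s \<in> S" "tight_s_cut G k r s U" "tight_s_cut G k r s W"
  shows "tight_s_cut G k r s (U \<union> W) \<and> tight_s_cut G k r s (U \<inter> W)"
proof -
  have cuts: "s_cut G r s (U \<union> W)" "s_cut G r s (U \<inter> W)"
    using assms(2,3) unfolding tight_s_cut_def s_cut_def by auto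
  then have "k \<le> card (out_cut G (U \<union> W))" "k \<le> card (out_cut G (U \<inter> W))"
    using k_le_card_out_cut assms(1) by auto
  moreover have "card (out_cut G (U \<union> W)) + card (out_cut G (U \<inter> W)) \<le> k + k"
    using card_out_cut_submodular[OF finite_arcs, of U W] assms(2,3)
    unfolding tight_s_cut_def by simp
  ultimately show ?thesis
    using cuts unfolding tight_s_cut_def by simp
qed

lemma tight_s_cut_UNION_INTER:
  assumes "s \<in> S" "finite H" "H \<noteq> {}" "\<forall>i\<in>H. tight_s_cut G k r s (W i)"
  shows "tight_s_cut G k r s (\<Union>i\<in>H. W i) \<and> tight_s_cut G k r s (\<Inter>i\<in>H. W i)"
  using assms(2-)
proof (induction H rule: finite_ne_induct)
  case (insert i H)
  then have Wi: "tight_s_cut G k r s (W i)"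
    and UN: "tight_s_cut G k r s (\<Union>j\<in>H. W j)" and INT: "tight_s_cut G k r s (\<Inter>j\<in>H. W j)"
    by simp_all
  show ?case
    using tight_s_cut_Un_Int[OF assms(1) Wi UN] tight_s_cut_Un_Int[OF assms(1) Wi INT] by simp
qed simp

context
  fixes s :: 'a and H :: "nat set" and e :: "nat \<Rightarrow> 'b list" and W :: "nat \<Rightarrow> 'a set"
    and a b :: cut_position
  assumes terminal: "s \<in> S"
    and finite_H: "finite H" and k_less_card: "k < card H"
    and cycles: "\<forall>i\<in>H. pre_digraph.cycle G (e i)"
    and disjoint: "\<forall>i\<in>H. \<forall>j\<in>H. i \<noteq> j \<longrightarrow> cyc_verts G (e i) \<inter> cyc_verts G (e j) = {}"
    and cuts: "\<forall>i\<in>H. tight_s_cut G k r s (W i) \<and> properly_intersects G (W i) (e i)"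
    and homogeneous: "\<forall>i\<in>H. \<forall>j\<in>H. i < j \<longrightarrow>
       cycle_position G (W i) (e j) = a \<and> cycle_position G (W j) (e i) = b"
begin

lemma nonempty_H: "H \<noteq> {}"
  using k_less_card by auto

lemma tight_s_cut_misses_some_cycle:
  assumes "tight_s_cut G k r s U"
  shows "\<exists>i\<in>H. \<not> properly_intersects G U (e i)"
proof (rule ccontr)
  assume "\<not> ?thesis"
  then have "card H \<le> card (out_cut G U)"
    using card_crossing_cycles_le[OF finite_arcs cycles disjoint] by blast
  then show False
    using assms k_less_card unfolding tight_s_cut_def by simp
qed

lemma homogeneous_positions_not_Crossing: "a \<noteq> Crossing" "b \<noteq> Crossing"
proof -
  show "a \<noteq> Crossing"
  proof
    assume "a = Crossing"
    then have "\<forall>j\<in>H. properly_intersects G (W (Min H)) (e j)"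
      using cuts homogeneous finite_H nonempty_H
      by (metis Min_in Min_le cycle_position_Crossing order_neq_le_trans)
    then show False
      using tight_s_cut_misses_some_cycle cuts finite_H nonempty_H Min_in by blast
  qed
  show "b \<noteq> Crossing"
  proof
    assume "b = Crossing"
    then have "\<forall>j\<in>H. properly_intersects G (W (Max H)) (e j)"
      using cuts homogeneous finite_H nonempty_H
      by (metis Max_in Max_ge cycle_position_Crossing order_neq_le_trans)
    then show False
      using tight_s_cut_misses_some_cycle cuts finite_H nonempty_H Max_in by blast
  qed
qed

lemma homogeneous_positions_not_equal: "\<not> (a = Inside \<and> b = Inside)" "\<not> (a = Outside \<and> b = Outside)"
proof -
  have tight: "tight_s_cut G k r s (\<Union>i\<in>H. W i)" "tight_s_cut G k r s (\<Inter>i\<in>H. W i)"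
    using tight_s_cut_UNION_INTER[OF terminal finite_H nonempty_H] cuts by auto
  have position_eq: "cycle_position G (W i) (e j) = c"
    if "a = c" "b = c" "i \<in> H" "j \<in> H" "i \<noteq> j" for i j c
    using homogeneous that by (cases "i < j") auto
  show "\<not> (a = Inside \<and> b = Inside)"
  proof
    assume "a = Inside \<and> b = Inside"
    then have "\<forall>j\<in>H. properly_intersects G (\<Inter>i\<in>H. W i) (e j)"
      using position_eq cuts cycle_position_Inside properly_intersects_INTER by (metis DiffE insertI1)
    then show False
      using tight_s_cut_misses_some_cycle tight by blast
  qed
  show "\<not> (a = Outside \<and> b = Outside)"
  proof
    assume "a = Outside \<and> b = Outside"
    then have "\<forall>j\<in>H. properly_intersects G (\<Union>i\<in>H. W i) (e j)"
      using position_eq cuts cycle_position_Outside properly_intersects_UNION by (metis DiffE insertI1)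
    then show False
      using tight_s_cut_misses_some_cycle tight by blast
  qed
qed

lemma homogeneous_positions_nested:
  "(a = Outside \<and> b = Inside) \<or> (a = Inside \<and> b = Outside)"
  using homogeneous_positions_not_Crossing homogeneous_positions_not_equal
  by (cases a; cases b) auto

lemma s_ordered_selection:
  assumes "x ` {1..q} \<subseteq> H" "strict_mono_on {1..q} x"
  shows "s_ordered G k r s q (\<lambda>p. e (x p)) \<or> s_ordered G k r s q (\<lambda>p. e (x (q + 1 - p)))"
  using homogeneous_positions_nested
proof
  assume ab: "a = Outside \<and> b = Inside"
  have "s_ordered G k r s q (\<lambda>p. e (x p))"
  proof (rule s_orderedI[where U = "\<lambda>p. W (x p)"])
    show "tight_s_cut G k r s (W (x p)) \<and> properly_intersects G (W (x p)) (e (x p))"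
      if "p \<in> {1..q}" for p
      using cuts assms(1) that by blast
    show "cyc_verts G (e (x i)) \<subseteq> W (x j) \<and> cyc_verts G (e (x j)) \<inter> W (x i) = {}"
      if "i \<in> {1..q}" "j \<in> {1..q}" "i < j" for i j
    proof -
      have "x i < x j"
        using assms(2) that unfolding strict_mono_on_def by blast
      then show ?thesis
        using homogeneous assms(1) that ab cycle_position_Inside cycle_position_Outside
        by (meson image_subset_iff)
    qed
  qed
  then show ?thesis ..
next
  assume ab: "a = Inside \<and> b = Outside"
  have reflect: "q + 1 - p \<in> {1..q}" if "p \<in> {1..q}" for p
    using that by auto
  have "s_ordered G k r s q (\<lambda>p. e (x (q + 1 - p)))"
  proof (rule s_orderedI[where U = "\<lambda>p. W (x (q + 1 - p))"])
    show "tight_s_cut G k r s (W (x (q + 1 - p)))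
            \<and> properly_intersects G (W (x (q + 1 - p))) (e (x (q + 1 - p)))"
      if "p \<in> {1..q}" for p
      using cuts assms(1) reflect that by blast
    show "cyc_verts G (e (x (q + 1 - i))) \<subseteq> W (x (q + 1 - j))
            \<and> cyc_verts G (e (x (q + 1 - j))) \<inter> W (x (q + 1 - i)) = {}"
      if "i \<in> {1..q}" "j \<in> {1..q}" "i < j" for i j
    proof -
      have "x (q + 1 - j) < x (q + 1 - i)"
        using assms(2) reflect that unfolding strict_mono_on_def by auto
      then show ?thesis
        using homogeneous assms(1) reflect that ab cycle_position_Inside cycle_position_Outside
        by (meson image_subset_iff)
    qed
  qed
  then show ?thesis ..
qed

end

lemma essential_cycles_ordered:
  assumes finite_S: "finite S" and finite_cycles: "finite \<C>"
    and cycles: "\<forall>C\<in>\<C>. pre_digraph.cycle G C"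
    and disjoint: "\<forall>C\<in>\<C>. \<forall>C'\<in>\<C>. C \<noteq> C' \<longrightarrow> cyc_verts G C \<inter> cyc_verts G C' = {}"
    and essential: "\<forall>C\<in>\<C>. \<forall>s\<in>S. s_essential G k r s C"
    and ramsey: "partn_lst {..<card \<C>} (replicate (9 ^ card S) (q + k + 1)) 2"
  shows "\<exists>Cs. (\<forall>i\<in>{1..q}. Cs i \<in> \<C>) \<and>
           (\<forall>s\<in>S. s_ordered G k r s q Cs \<or> s_ordered G k r s q (\<lambda>i. Cs (q + 1 - i)))"
proof -
  obtain e where e: "bij_betw e {..<card \<C>} \<C>"
    using ex_bij_betw_nat_finite[OF finite_cycles] by (metis atLeast0LessThan)
  have "\<forall>s\<in>S. \<forall>i<card \<C>. \<exists>U. tight_s_cut G k r s U \<and> properly_intersects G U (e i)"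
    using essential bij_betwE[OF e] unfolding s_essential_def by blast
  then obtain W where W: "\<forall>s\<in>S. \<forall>i<card \<C>.
      tight_s_cut G k r s (W s i) \<and> properly_intersects G (W s i) (e i)"
    by metis
  define colour where "colour P = (\<lambda>s\<in>S.
      (cycle_position G (W s (Min P)) (e (Max P)), cycle_position G (W s (Max P)) (e (Min P))))"
    for P
  have "colour \<in> [{..<card \<C>}]\<^bsup>2\<^esup> \<rightarrow> S \<rightarrow>\<^sub>E UNIV"
    unfolding colour_def by auto
  moreover have "card (S \<rightarrow>\<^sub>E (UNIV :: (cut_position \<times> cut_position) set)) = 9 ^ card S"
    using finite_S by (simp add: card_PiE card_UNIV_cut_position_pair)
  ultimately obtain H \<kappa> where H: "H \<in> [{..<card \<C>}]\<^bsup>(q + k + 1)\<^esup>" "colour ` [H]\<^bsup>2\<^esup> \<subseteq> {\<kappa>}"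
    using partn_lst_homogeneous_finite_colours[OF ramsey] finite_S by (metis finite_PiE finite order_refl)
  then have finite_H: "finite H" and card_H: "card H = q + k + 1" and H_sub: "H \<subseteq> {..<card \<C>}"
    unfolding nsets_def by auto
  obtain x where x: "x ` {1..q} \<subseteq> H" "strict_mono_on {1..q} x"
    using strict_mono_selection[OF finite_H] card_H by (metis le_add1 add.assoc)
  have e_H: "e i \<in> \<C>" if "i \<in> H" for i
    using that H_sub bij_betwE[OF e] by blast
  show ?thesis
  proof (intro exI[of _ "\<lambda>p. e (x p)"] conjI ballI)
    show "e (x p) \<in> \<C>" if "p \<in> {1..q}" for p
      using that x(1) e_H by blast
    fix s assume s: "s \<in> S"
    have homogeneous: "\<forall>i\<in>H. \<forall>j\<in>H. i < j \<longrightarrow>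
        cycle_position G (W s i) (e j) = fst (\<kappa> s) \<and> cycle_position G (W s j) (e i) = snd (\<kappa> s)"
    proof (intro ballI impI)
      fix i j assume ij: "i \<in> H" "j \<in> H" "i < j"
      then have "{i, j} \<in> [H]\<^bsup>2\<^esup>"
        by simp
      then have "colour {i, j} = \<kappa>"
        using H(2) by blast
      moreover have "Min {i, j} = i" "Max {i, j} = j"
        using ij by auto
      ultimately show "cycle_position G (W s i) (e j) = fst (\<kappa> s)
          \<and> cycle_position G (W s j) (e i) = snd (\<kappa> s)"
        using s unfolding colour_def by auto
    qed
    have "k < card H"
      using card_H by simp
    moreover have "\<forall>i\<in>H. pre_digraph.cycle G (e i)"
      using cycles e_H by blast
    moreover have "\<forall>i\<in>H. \<forall>j\<in>H. i \<noteq> j \<longrightarrow> cyc_verts G (e i) \<inter> cyc_verts G (e j) = {}"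
      using disjoint e_H bij_betw_imp_inj_on[OF e] H_sub unfolding inj_on_def by (metis subsetD)
    moreover have "\<forall>i\<in>H. tight_s_cut G k r s (W s i) \<and> properly_intersects G (W s i) (e i)"
      using W s H_sub by blast
    ultimately show "s_ordered G k r s q (\<lambda>p. e (x p)) \<or> s_ordered G k r s q (\<lambda>p. e (x (q + 1 - p)))"
      using s_ordered_selection[OF s finite_H _ _ _ _ homogeneous x] by blast
  qed
qed

end

theorem proposition2p4:
  "\<exists>f :: nat \<Rightarrow> nat \<Rightarrow> nat \<Rightarrow> nat.
     \<forall>q k t. 0 < q \<and> 0 < k \<and> 0 < t \<longrightarrow>
     (\<forall>(G :: ('a,'b) pre_digraph) r S (\<C> :: 'b list set).
        fin_digraph G \<and> r \<in> verts G \<and> S \<subseteq> verts G - {r} \<and> card S = t \<and>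
        steiner_rooted_k_arc_connected G r S k \<and>
        (\<forall>C\<in>\<C>. pre_digraph.cycle G C) \<and>
        (\<forall>C\<in>\<C>. \<forall>C'\<in>\<C>. C \<noteq> C' \<longrightarrow> cyc_verts G C \<inter> cyc_verts G C' = {}) \<and>
        card \<C> \<ge> f q k t \<and>
        (\<forall>C\<in>\<C>. \<forall>s\<in>S. s_essential G k r s C)
        \<longrightarrow> (\<exists>Cs :: nat \<Rightarrow> 'b list.
               (\<forall>i\<in>{1..q}. Cs i \<in> \<C>) \<and>
               (\<forall>s\<in>S. s_ordered G k r s q Cs \<or>
                        s_ordered G k r s q (\<lambda>i. Cs (q + 1 - i)))))"
proof -
  have "\<forall>c m. \<exists>N :: nat. partn_lst {..<N} (replicate c m) 2"
    by (intro allI ramsey_full)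
  then obtain R :: "nat \<Rightarrow> nat \<Rightarrow> nat" where R: "\<And>c m. partn_lst {..<R c m} (replicate c m) 2"
    by metis
  \<comment> \<open>the \<open>Suc\<close> forces \<open>\<C> \<noteq> {}\<close>, so that \<open>card \<C>\<close> is not the junk value of an infinite family\<close>
  show ?thesis
  proof (intro exI[of _ "\<lambda>q k t. Suc (R (9 ^ t) (q + k + 1))"] allI impI, elim conjE)
    fix q k t :: nat and G :: "('a, 'b) pre_digraph" and r S and \<C> :: "'b list set"
    assume "0 < q" "0 < k" "0 < t" and fin: "fin_digraph G" and "r \<in> verts G" "S \<subseteq> verts G - {r}"
      and card_S: "card S = t" and conn: "steiner_rooted_k_arc_connected G r S k"
      and cycles: "\<forall>C\<in>\<C>. pre_digraph.cycle G C"
      and disjoint: "\<forall>C\<in>\<C>. \<forall>C'\<in>\<C>. C \<noteq> C' \<longrightarrow> cyc_verts G C \<inter> cyc_verts G C' = {}"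
      and card_bound: "Suc (R (9 ^ t) (q + k + 1)) \<le> card \<C>"
      and essential: "\<forall>C\<in>\<C>. \<forall>s\<in>S. s_essential G k r s C"
    have "finite \<C>"
      using card_bound card.infinite by fastforce
    moreover have "finite S"
      using card_S \<open>0 < t\<close> card.infinite by fastforce
    moreover have "partn_lst {..<card \<C>} (replicate (9 ^ card S) (q + k + 1)) 2"
      using partn_lst_greater_resource[OF R] card_bound card_S by simp
    ultimately show "\<exists>Cs. (\<forall>i\<in>{1..q}. Cs i \<in> \<C>) \<and>
        (\<forall>s\<in>S. s_ordered G k r s q Cs \<or> s_ordered G k r s q (\<lambda>i. Cs (q + 1 - i)))"
      using essential_cycles_ordered[OF fin conn _ _ cycles disjoint essential] by blast
  qed
qed

end
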